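(* Let $r_1,r_2\in(0,1)$, $a_1,a_2\in(1,\infty)$, and for $i=1,2$ let $l_i$ be Lebesgue measurable, integrable, with $\int_{\mathbb{R}}l_i=1$, $\int_{\mathbb{R}}l_i(y)e^{\lambda y}dy<\infty$ for all $\lambda\in\mathbb{R}$, and $l_i(y)=l_i(-y)\ge0$. Define $Q=(Q_1,Q_2)$ on $\mathcal{C}_{[\theta,\mathbf{1}]}$ by \[ Q_1(\phi,\psi)(t)=1-\int_{\mathbb{R}}(1-\phi (y))e^{r_{1}(\phi (y)-a_{1}\psi(y))}l_{1}(t-y)\,dy,\quad Q_2(\phi,\psi)(t)=\int_{\mathbb{R}} \psi (y)e^{r_{2}(1-a_2-\psi (y)+a_{2}\phi (y))}l_{2}(t-y)\,dy, \] and let $F_0=(0,0)$, $F_2=(1-k_1,k_2)$, $F_3=(1,1)$ with $k_1=\frac{1-a_1}{1-a_1a_2}$, $k_2=\frac{1-a_2}{1-a_1a_2}$. Then \[ c^*_-(F_2,F_3)+c^*_+(F_0,F_2)>0, \] where $c^*_-(F_2,F_3)$ is the leftward spreading speed of the monostable subsystem $\{Q^n\}_{n\ge0}$ restricted to $\mathcal{C}_{[F_2,F_3]}$ and $c^*_+(F_0,F_2)$ is the rightward spreading speed of the monostable subsystem $\{Q^n\}_{n\ge0}$ restricted to $\mathcal{C}_{[F_0,F_2]}$.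
   Context: $\mathcal{C}$ is the space of uniformly continuous bounded functions $\mathbb{R}\to\mathbb{R}^2$ with the compact-open topology and componentwise order; for $A\le B$ in $\mathbb{R}^2$, $\mathcal{C}_{[A,B]}=\{U\in\mathcal{C}: A\le U(x)\le B\ \forall x\}$. $F_0,F_2,F_3$ are constant fixed points of $Q$ with $F_0\le F_2\le F_3$, and $Q$ maps $\mathcal{C}_{[F_0,F_2]}$ and $\mathcal{C}_{[F_2,F_3]}$ into themselves. On $\mathcal{C}_{[F_2,F_3]}$ the state $F_3$ is attracting and $F_2$ unstable; the leftward spreading speed $c^*_-(F_2,F_3)$ (in the sense of Liang–Zhao / Fang–Zhao) is the number $c^*$ such that for $\Phi\in\mathcal{C}_{[F_2,F_3]}$ with $\Phi-F_2$ compactly supported, $\lim_{n\to\infty}\sup_{x\le -cn}|Q^n[\Phi](x)-F_2|=0$ for every $c>c^*$, while for $c<c^*$ and $\Phi$ sufficiently far from $F_2$ on a sufficiently long interval, $\lim_{n\to\infty}\sup_{-cn\le x\le 0}|Q^n[\Phi](x)-F_3|=0$ (the speed at which $F_3$ invades $F_2$ to the left). Analogously, on $\mathcal{C}_{[F_0,F_2]}$ the state $F_0$ is attracting and $F_2$ unstable, and $c^*_+(F_0,F_2)$ is the speed at which $F_0$ invades $F_2$ to the right: for $\Phi$ with $F_2-\Phi$ compactly supported, $\lim_n\sup_{x\ge cn}|Q^n[\Phi](x)-F_2|=0$ for $c>c^*_+$, and for $c<c^*_+$ and suitable $\Phi$, $\lim_n\sup_{0\le x\le cn}|Q^n[\Phi](x)-F_0|=0$.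 *)

theory Defs
  imports "HOL-Analysis.Analysis"
begin

type_synonym state = "real \<times> real"
type_synonym sfun = "real \<Rightarrow> real \<times> real"

definition leq2 :: "state \<Rightarrow> state \<Rightarrow> bool" where
  "leq2 u v \<longleftrightarrow> fst u \<le> fst v \<and> snd u \<le> snd v"

definition UCB :: "sfun set" where
  "UCB = {U. uniformly_continuous_on UNIV U \<and> bounded (range U)}"

definition Cint :: "state \<Rightarrow> state \<Rightarrow> sfun set" where
  "Cint A B = {U \<in> UCB. \<forall>x. leq2 A (U x) \<and> leq2 (U x) B}"

definition Qop :: "real \<Rightarrow> real \<Rightarrow> real \<Rightarrow> real \<Rightarrow> (real \<Rightarrow> real) \<Rightarrow> (real \<Rightarrow> real)
    \<Rightarrow> sfun \<Rightarrow> sfun" where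
  "Qop r1 r2 a1 a2 l1 l2 U = (\<lambda>t.
     (1 - (LINT y|lebesgue. (1 - fst (U y)) * exp (r1 * (fst (U y) - a1 * snd (U y))) * l1 (t - y)),
      (LINT y|lebesgue. snd (U y) * exp (r2 * (1 - a2 - snd (U y) + a2 * fst (U y))) * l2 (t - y))))"

text \<open>Leftward spreading speed c* of the monostable system Q on C_[Uu,S], where Uu (lower end)
  is the unstable state and S (upper end) the attracting state: the speed at which S invades Uu
  to the left (Liang--Zhao / Fang--Zhao characterization).\<close>
definition left_speed :: "(sfun \<Rightarrow> sfun) \<Rightarrow> state \<Rightarrow> state \<Rightarrow> real \<Rightarrow> bool" where
  "left_speed Q Uu S cs \<longleftrightarrow>
     (\<forall>\<Phi>\<in>Cint Uu S. (\<exists>R. \<forall>x. \<bar>x\<bar> > R \<longrightarrow> \<Phi> x = Uu) \<longrightarrow>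
        (\<forall>c>cs. \<forall>\<epsilon>>0. eventually (\<lambda>n. \<forall>x. x \<le> - c * real n \<longrightarrow> dist ((Q ^^ n) \<Phi> x) Uu \<le> \<epsilon>) sequentially))
   \<and> (\<forall>c<cs. \<forall>\<sigma>::state. fst \<sigma> > 0 \<and> snd \<sigma> > 0 \<longrightarrow>
        (\<exists>r>0. \<forall>\<Phi>\<in>Cint Uu S.
           (\<exists>x0. \<forall>x. x0 - r \<le> x \<and> x \<le> x0 + r \<longrightarrow> leq2 (fst Uu + fst \<sigma>, snd Uu + snd \<sigma>) (\<Phi> x)) \<longrightarrow>
           (\<forall>\<epsilon>>0. eventually (\<lambda>n. \<forall>x. - c * real n \<le> x \<and> x \<le> 0 \<longrightarrow> dist ((Q ^^ n) \<Phi> x) S \<le> \<epsilon>) sequentially)))"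

text \<open>Rightward spreading speed c* of Q on C_[S,Uu], where S (lower end) is the attracting
  state and Uu (upper end) the unstable state: the speed at which S invades Uu to the right.\<close>
definition right_speed :: "(sfun \<Rightarrow> sfun) \<Rightarrow> state \<Rightarrow> state \<Rightarrow> real \<Rightarrow> bool" where
  "right_speed Q S Uu cs \<longleftrightarrow>
     (\<forall>\<Phi>\<in>Cint S Uu. (\<exists>R. \<forall>x. \<bar>x\<bar> > R \<longrightarrow> \<Phi> x = Uu) \<longrightarrow>
        (\<forall>c>cs. \<forall>\<epsilon>>0. eventually (\<lambda>n. \<forall>x. c * real n \<le> x \<longrightarrow> dist ((Q ^^ n) \<Phi> x) Uu \<le> \<epsilon>) sequentially))
   \<and> (\<forall>c<cs. \<forall>\<sigma>::state. fst \<sigma> > 0 \<and> snd \<sigma> > 0 \<longrightarrow>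
        (\<exists>r>0. \<forall>\<Phi>\<in>Cint S Uu.
           (\<exists>x0. \<forall>x. x0 - r \<le> x \<and> x \<le> x0 + r \<longrightarrow> leq2 (\<Phi> x) (fst Uu - fst \<sigma>, snd Uu - snd \<sigma>)) \<longrightarrow>
           (\<forall>\<epsilon>>0. eventually (\<lambda>n. \<forall>x. 0 \<le> x \<and> x \<le> c * real n \<longrightarrow> dist ((Q ^^ n) \<Phi> x) S \<le> \<epsilon>) sequentially)))"

definition kernel_ok :: "(real \<Rightarrow> real) \<Rightarrow> bool" where
  "kernel_ok l \<longleftrightarrow> l \<in> borel_measurable lebesgue \<and> integrable lebesgue l
     \<and> (LINT y|lebesgue. l y) = 1
     \<and> (\<forall>\<mu>::real. integrable lebesgue (\<lambda>y. l y * exp (\<mu> * y)))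
     \<and> (\<forall>y. l y = l (- y) \<and> l y \<ge> 0)"

end

theory Submission
  imports Defs
begin

text \<open>The state \<open>F\<^sub>2\<close> is a saddle of the kinetics, unstable along the diagonal direction \<open>(1, 1)\<close>:
  near \<open>F\<^sub>2\<close> the reaction terms amplify a diagonal displacement by some factor \<open>\<kappa> > 1\<close>. A wide
  cosine bump \<open>\<eta>\<close> loses less than the factor \<open>\<kappa>\<close> under convolution with either kernel, even after a
  small shift \<open>c > 0\<close>: \<open>\<eta>(x + c) \<le> \<kappa> (l * \<eta>)(x)\<close>. Hence \<open>Q\<^sup>n(F\<^sub>2 + \<delta>\<eta>)\<close> stays above
  \<open>F\<^sub>2 + \<delta>\<eta>(\<cdot> + nc)\<close>, so a perturbation above \<open>F\<^sub>2\<close> is carried to the left with speed \<open>c\<close>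
  and \<open>c\<^sup>*\<^sub>-(F\<^sub>2,F\<^sub>3) \<ge> c > 0\<close>; and \<open>F\<^sub>2 - \<delta>\<eta>\<close> is a stationary supersolution, so a perturbation
  below \<open>F\<^sub>2\<close> never leaves the origin and \<open>c\<^sup>*\<^sub>+(F\<^sub>0,F\<^sub>2) \<ge> 0\<close>.\<close>

section \<open>Convolution with a dispersal kernel\<close>

lemma kernel_okD:
  assumes "kernel_ok l"
  shows "integrable lebesgue l" "l \<in> borel_measurable lebesgue" "(LINT y|lebesgue. l y) = 1"
    "\<And>y. l y \<ge> 0" "\<And>y. l (-y) = l y"
  using assms unfolding kernel_ok_def by auto

lemma continuous_imp_lebesgue_measurable:
  fixes h :: "real \<Rightarrow> real"
  assumes "continuous_on UNIV h"
  shows "h \<in> borel_measurable lebesgue"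
  using continuous_imp_measurable_on_sets_lebesgue[OF assms] by simp

lemma integrable_bounded_mult:
  fixes g h :: "real \<Rightarrow> real"
  assumes "integrable M g" "h \<in> borel_measurable M" "\<And>y. \<bar>h y\<bar> \<le> B"
  shows "integrable M (\<lambda>y. h y * g y)"
proof (rule Bochner_Integration.integrable_bound)
  show "integrable M (\<lambda>y. B * \<bar>g y\<bar>)" using assms(1) by simp
  show "(\<lambda>y. h y * g y) \<in> borel_measurable M"
    using assms(1,2) borel_measurable_integrable by measurable
  show "AE y in M. norm (h y * g y) \<le> norm (B * \<bar>g y\<bar>)"
    using assms(3) order_trans[OF abs_ge_zero assms(3)]
    by (intro AE_I2) (auto simp: abs_mult intro: mult_right_mono)
qed

lemma integrable_kernel_reflected:
  assumes "kernel_ok l"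
  shows "integrable lebesgue (\<lambda>y. l (t - y))"
  using lebesgue_integrable_real_affine_iff[of "-1" l t] kernel_okD(1)[OF assms] by simp

definition kconv :: "(real \<Rightarrow> real) \<Rightarrow> (real \<Rightarrow> real) \<Rightarrow> real \<Rightarrow> real" where
  "kconv l h t = (LINT y|lebesgue. h y * l (t - y))"

lemma kconv_swap: "kconv l h t = (LINT y|lebesgue. h (t - y) * l y)"
  unfolding kconv_def using lebesgue_integral_real_affine[of "-1" "\<lambda>y. h y * l (t - y)" t] by simp

lemma kconv_translate: "kconv l (\<lambda>y. h (y + \<sigma>)) t = kconv l h (t + \<sigma>)"
  by (simp add: kconv_swap algebra_simps)

lemma integrable_kconv_integrand:
  assumes "kernel_ok l" "continuous_on UNIV h" "\<And>y. \<bar>h y\<bar> \<le> B"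
  shows "integrable lebesgue (\<lambda>y. h y * l (t - y))"
  using integrable_bounded_mult[OF integrable_kernel_reflected[OF assms(1)]
      continuous_imp_lebesgue_measurable[OF assms(2)] assms(3)] .

lemma kconv_const:
  assumes "kernel_ok l"
  shows "kconv l (\<lambda>_. a) t = a"
  using kconv_swap[of l "\<lambda>_. a" t] kernel_okD(3)[OF assms] by simp

lemma kconv_affine:
  assumes "kernel_ok l" "continuous_on UNIV h" "\<And>y. \<bar>h y\<bar> \<le> B"
  shows "kconv l (\<lambda>y. a + b * h y) t = a + b * kconv l h t"
proof -
  have "kconv l (\<lambda>y. a + b * h y) t = (LINT y|lebesgue. a * l (t - y) + b * (h y * l (t - y)))"
    unfolding kconv_def by (simp add: algebra_simps)
  also have "\<dots> = a * kconv l (\<lambda>_. 1) t + b * kconv l h t"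
    using integrable_kernel_reflected[OF assms(1)] integrable_kconv_integrand[OF assms]
    unfolding kconv_def by simp
  finally show ?thesis using kconv_const[OF assms(1)] by simp
qed

lemma kconv_mono:
  assumes "kernel_ok l" "continuous_on UNIV h" "\<And>y. \<bar>h y\<bar> \<le> B"
    "continuous_on UNIV h'" "\<And>y. \<bar>h' y\<bar> \<le> B'" "\<And>y. h y \<le> h' y"
  shows "kconv l h t \<le> kconv l h' t"
  unfolding kconv_def
  using assms(6) kernel_okD(4)[OF assms(1)]
  by (intro Bochner_Integration.integral_mono integrable_kconv_integrand[OF assms(1-3)]
      integrable_kconv_integrand[OF assms(1,4,5)] mult_right_mono)

lemma kconv_nonneg:
  assumes "kernel_ok l" "\<And>y. h y \<ge> 0"
  shows "kconv l h t \<ge> 0"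
  unfolding kconv_def using assms kernel_okD(4)[OF assms(1)] by (intro integral_nonneg_AE) auto

lemma continuous_on_kconv:
  assumes "kernel_ok l" "continuous_on UNIV h" "\<And>y. \<bar>h y\<bar> \<le> B"
  shows "continuous_on UNIV (kconv l h)"
proof (rule continuous_at_imp_continuous_on, intro ballI)
  fix t0 :: real
  show "isCont (kconv l h) t0"
  proof (rule continuous_at_sequentiallyI)
    fix u :: "nat \<Rightarrow> real" assume u: "u \<longlonglongrightarrow> t0"
    have measurable: "(\<lambda>y. h (s - y) * l y) \<in> borel_measurable lebesgue" for s
      using kernel_okD(2)[OF assms(1)]
      by (intro borel_measurable_times[OF continuous_imp_lebesgue_measurable]
          continuous_on_compose2[OF assms(2)] continuous_intros) auto
    have "(\<lambda>n. LINT y|lebesgue. h (u n - y) * l y) \<longlonglongrightarrow> (LINT y|lebesgue. h (t0 - y) * l y)"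
    proof (rule integral_dominated_convergence[where w="\<lambda>y. B * l y"])
      show "integrable lebesgue (\<lambda>y. B * l y)" using kernel_okD(1)[OF assms(1)] by simp
      show "AE y in lebesgue. (\<lambda>n. h (u n - y) * l y) \<longlonglongrightarrow> h (t0 - y) * l y"
        using u by (intro AE_I2 tendsto_intros continuous_on_tendsto_compose[OF assms(2)]) auto
      show "AE y in lebesgue. norm (h (u n - y) * l y) \<le> B * l y" for n
        using assms(3) kernel_okD(4)[OF assms(1)] by (intro AE_I2) (simp add: abs_mult mult_right_mono)
    qed (use measurable in auto)
    then show "(\<lambda>n. kconv l h (u n)) \<longlonglongrightarrow> kconv l h t0" by (simp add: kconv_swap)
  qed
qed

lemma kconv_le_affine:
  assumes "kernel_ok l" "continuous_on UNIV h" "\<And>y. \<bar>h y\<bar> \<le> B"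
    "continuous_on UNIV \<phi>" "\<And>y. \<bar>\<phi> y\<bar> \<le> 1" "\<And>y. h y \<le> a + b * \<phi> y"
  shows "kconv l h t \<le> a + b * kconv l \<phi> t"
proof -
  have "\<bar>a + b * \<phi> y\<bar> \<le> \<bar>a\<bar> + \<bar>b\<bar>" for y
    using abs_triangle_ineq[of a "b * \<phi> y"] mult_left_le[OF assms(5)[of y], of "\<bar>b\<bar>"]
    by (simp add: abs_mult)
  then have "kconv l h t \<le> kconv l (\<lambda>y. a + b * \<phi> y) t"
    using assms by (intro kconv_mono[OF assms(1-3)] continuous_intros) auto
  then show ?thesis using kconv_affine[OF assms(1,4,5)] by simp
qed

lemma kconv_le_const:
  assumes "kernel_ok l" "continuous_on UNIV h" "\<And>y. \<bar>h y\<bar> \<le> B" "\<And>y. h y \<le> a"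
  shows "kconv l h t \<le> a"
  using kconv_le_affine[OF assms(1-3), where \<phi>="\<lambda>_. 0" and a=a and b=0] assms(4) by simp

lemma affine_le_kconv:
  assumes "kernel_ok l" "continuous_on UNIV h" "\<And>y. \<bar>h y\<bar> \<le> B"
    "continuous_on UNIV \<phi>" "\<And>y. \<bar>\<phi> y\<bar> \<le> 1" "\<And>y. a + b * \<phi> y \<le> h y"
  shows "a + b * kconv l \<phi> t \<le> kconv l h t"
proof -
  have "\<bar>- h y\<bar> \<le> B" "- h y \<le> - a + - b * \<phi> y" for y using assms(3,6)[of y] by auto
  then have "kconv l (\<lambda>y. - h y) t \<le> - a + - b * kconv l \<phi> t"
    using assms(2) by (intro kconv_le_affine[OF assms(1) _ _ assms(4,5)] continuous_intros) auto
  moreover have "kconv l (\<lambda>y. - h y) t = - kconv l h t"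
    using kconv_affine[OF assms(1-3), of 0 "-1" t] by simp
  ultimately show ?thesis by simp
qed

section \<open>A cosine bump\<close>

definition bump :: "real \<Rightarrow> real \<Rightarrow> real" where
  "bump L t = cos (pi * max (-(L/2)) (min (L/2) t) / L)"

lemma bump_eq_cos:
  assumes "\<bar>t\<bar> \<le> L/2"
  shows "bump L t = cos (pi * t / L)"
proof -
  have "max (-(L/2)) (min (L/2) t) = t" using assms by auto
  then show ?thesis unfolding bump_def by simp
qed

lemma bump_eq_0:
  assumes "L > 0" "\<bar>t\<bar> \<ge> L/2"
  shows "bump L t = 0"
proof -
  have "max (-(L/2)) (min (L/2) t) \<in> {L/2, -(L/2)}"
    using assms by (auto simp: max_def min_def)
  then show ?thesis using assms unfolding bump_def by auto
qed

lemma bump_0: "L > 0 \<Longrightarrow> bump L 0 = 1"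
  by (simp add: bump_eq_cos)

lemma abs_bump_le_1: "\<bar>bump L t\<bar> \<le> 1"
  unfolding bump_def by simp

lemma bump_nonneg:
  assumes "L > 0"
  shows "0 \<le> bump L t"
proof -
  define m where "m = max (-(L/2)) (min (L/2) t) / L"
  have "-(1/2) \<le> m" "m \<le> 1/2"
    using assms unfolding m_def by (auto simp: field_simps)
  then have "pi * -(1/2) \<le> pi * m" "pi * m \<le> pi * (1/2)"
    by (intro mult_left_mono; simp)+
  then show ?thesis unfolding bump_def m_def by (intro cos_ge_zero) auto
qed

lemma continuous_on_bump [continuous_intros]:
  fixes f :: "real \<Rightarrow> real"
  assumes "continuous_on S f"
  shows "continuous_on S (\<lambda>x. bump L (f x))"
  unfolding bump_def divide_inverse by (intro continuous_intros assms)

lemma bump_lipschitz: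
  assumes "L > 0"
  shows "(pi / L)-lipschitz_on UNIV (bump L)"
proof (rule lipschitz_onI)
  have cos_lipschitz: "\<bar>cos a - cos b\<bar> \<le> \<bar>a - b\<bar>" for a b :: real
  proof -
    have "\<bar>cos a - cos b\<bar> = 2 * \<bar>sin ((a + b) / 2)\<bar> * \<bar>sin ((b - a) / 2)\<bar>"
      by (simp add: cos_diff_cos abs_mult)
    also have "\<dots> \<le> 2 * 1 * \<bar>(b - a) / 2\<bar>"
      by (intro mult_mono abs_sin_x_le_abs_x) auto
    finally show ?thesis by simp
  qed
  fix x y :: real
  define cx cy where "cx = max (-(L/2)) (min (L/2) x)" and "cy = max (-(L/2)) (min (L/2) y)"
  have "\<bar>bump L x - bump L y\<bar> \<le> \<bar>pi * cx / L - pi * cy / L\<bar>"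
    unfolding bump_def cx_def cy_def by (rule cos_lipschitz)
  also have "\<dots> = pi / L * \<bar>cx - cy\<bar>"
    using assms by (simp add: abs_mult diff_divide_distrib[symmetric] right_diff_distrib[symmetric])
  also have "\<dots> \<le> pi / L * \<bar>x - y\<bar>"
    using assms unfolding cx_def cy_def by (intro mult_left_mono) (auto simp: max_def min_def)
  finally show "dist (bump L x) (bump L y) \<le> pi / L * dist x y" by (simp add: dist_real_def)
qed (use assms in simp)

lemma cos_le_bump:
  assumes "L > 0" "\<bar>t\<bar> \<le> 3*L/2"
  shows "cos (pi * t / L) \<le> bump L t"
proof (cases "\<bar>t\<bar> \<le> L/2")
  case True then show ?thesis by (simp add: bump_eq_cos)
next
  case False
  have "-(pi/2) \<le> pi * \<bar>t\<bar> / L - pi" "pi * \<bar>t\<bar> / L - pi \<le> pi/2"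
    using False assms by (auto simp: field_simps)
  then have "0 \<le> cos (pi * \<bar>t\<bar> / L - pi)" by (rule cos_ge_zero)
  moreover have "cos (pi * t / L) = - cos (pi * \<bar>t\<bar> / L - pi)"
    by (cases "t \<ge> 0") auto
  ultimately show ?thesis using False assms by (simp add: bump_eq_0)
qed

lemma bump_profile_in_UCB:
  assumes "L > 0"
  shows "(\<lambda>y. (A + d * bump L y, B + d * bump L y)) \<in> UCB"
proof -
  have "(\<bar>d\<bar> * (pi / L))-lipschitz_on UNIV (\<lambda>y. d * bump L y)"
    by (intro lipschitz_on_cmult_real bump_lipschitz assms)
  then have "(0 + \<bar>d\<bar> * (pi / L))-lipschitz_on UNIV (\<lambda>y. C + d * bump L y)" for C
    by (rule lipschitz_on_add[OF lipschitz_on_constant])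
  then have "uniformly_continuous_on UNIV (\<lambda>y. (A + d * bump L y, B + d * bump L y))"
    by (intro lipschitz_on_uniformly_continuous[OF lipschitz_on_Pair])
  moreover have "bounded (range (\<lambda>y. (A + d * bump L y, B + d * bump L y)))"
  proof (rule boundedI)
    fix p assume "p \<in> range (\<lambda>y. (A + d * bump L y, B + d * bump L y))"
    then obtain y where p: "p = (A + d * bump L y, B + d * bump L y)" by auto
    have "\<bar>d * bump L y\<bar> \<le> \<bar>d\<bar>"
      using abs_bump_le_1[of L y] by (simp add: abs_mult mult_left_le)
    then show "norm p \<le> \<bar>A\<bar> + \<bar>B\<bar> + 2 * \<bar>d\<bar>"
      using norm_Pair_le[of "A + d * bump L y" "B + d * bump L y"] unfolding p by simp
  qed
  ultimately show ?thesis unfolding UCB_def by simp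
qed

section \<open>The bump is pushed forward by the kernels\<close>

definition cos_moment :: "(real \<Rightarrow> real) \<Rightarrow> real \<Rightarrow> real" where
  "cos_moment l L = (LINT y|lebesgue. indicator {-(L/2)..L/2} y * cos (pi * y / L) * l y)"

definition sin_moment :: "(real \<Rightarrow> real) \<Rightarrow> real \<Rightarrow> real" where
  "sin_moment l L = (LINT y|lebesgue. indicator {-(L/2)..L/2} y * \<bar>sin (pi * y / L)\<bar> * l y)"

lemma integrable_indicator_mult_kernel:
  fixes f :: "real \<Rightarrow> real"
  assumes "kernel_ok l" "continuous_on UNIV f" "\<And>y. \<bar>f y\<bar> \<le> 1"
  shows "integrable lebesgue (\<lambda>y. indicator {a..b} y * f y * l y)"
proof (rule integrable_bounded_mult[OF kernel_okD(1)[OF assms(1)], where B=1])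
  show "(\<lambda>y. indicator {a..b} y * f y) \<in> borel_measurable lebesgue"
    by (intro borel_measurable_times borel_measurable_indicator
        continuous_imp_lebesgue_measurable assms(2)) simp
  show "\<bar>indicator {a..b} y * f y\<bar> \<le> 1" for y
    using assms(3)[of y] by (simp add: indicator_def)
qed

lemma integrable_cos_moment: "kernel_ok l \<Longrightarrow>
    integrable lebesgue (\<lambda>y. indicator {-(L/2)..L/2} y * cos (pi * y / L) * l y)"
  by (rule integrable_indicator_mult_kernel) (auto simp: divide_inverse intro!: continuous_intros)

lemma integrable_sin_moment: "kernel_ok l \<Longrightarrow>
    integrable lebesgue (\<lambda>y. indicator {-(L/2)..L/2} y * \<bar>sin (pi * y / L)\<bar> * l y)"
  by (rule integrable_indicator_mult_kernel) (auto simp: divide_inverse intro!: continuous_intros)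

lemma weighted_cos_sin_le_bump_pair:
  assumes "L > 0" "\<bar>x\<bar> \<le> L" "0 \<le> \<tau>" "\<tau> \<le> 1" "\<bar>y\<bar> \<le> L/2"
  shows "(1+\<tau>) * cos (pi*x/L) * cos (pi*y/L) + (1-\<tau>) * \<bar>sin (pi*x/L)\<bar> * \<bar>sin (pi*y/L)\<bar>
           \<le> bump L (x - y) + bump L (x + y)"
proof -
  define u v where "u = pi*x/L" and "v = pi*y/L"
  have "cos (pi * (x - y) / L) \<le> bump L (x - y)" "cos (pi * (x + y) / L) \<le> bump L (x + y)"
    using assms abs_triangle_ineq4[of x y] abs_triangle_ineq[of x y] by (intro cos_le_bump; simp)+
  moreover have "pi * (x - y) / L = u - v" "pi * (x + y) / L = u + v"
    unfolding u_def v_def by (simp_all add: diff_divide_distrib add_divide_distrib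
        right_diff_distrib distrib_left)
  ultimately have minus: "cos u * cos v + sin u * sin v \<le> bump L (x - y)"
    and plus: "cos u * cos v - sin u * sin v \<le> bump L (x + y)"
    by (simp_all add: cos_diff cos_add)
  have "0 \<le> bump L (x - y)" "0 \<le> bump L (x + y)" using bump_nonneg[OF assms(1)] by auto
  then have "cos u * cos v + \<bar>sin u\<bar> * \<bar>sin v\<bar> \<le> bump L (x - y) + bump L (x + y)"
    using minus plus by (cases "sin u * sin v \<ge> 0") (auto simp: abs_mult)
  moreover have "2 * (cos u * cos v) \<le> bump L (x - y) + bump L (x + y)" using minus plus by linarith
  ultimately have "\<tau> * (2 * (cos u * cos v)) + (1 - \<tau>) * (cos u * cos v + \<bar>sin u\<bar> * \<bar>sin v\<bar>)
      \<le> \<tau> * (bump L (x - y) + bump L (x + y)) + (1 - \<tau>) * (bump L (x - y) + bump L (x + y))"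
    using assms(3,4) by (intro add_mono[OF mult_left_mono mult_left_mono]) auto
  then show ?thesis unfolding u_def[symmetric] v_def[symmetric] by (simp add: algebra_simps)
qed

lemma kconv_bump_ge_moments:
  assumes "kernel_ok l" "L > 0" "\<bar>x\<bar> \<le> L" "0 \<le> \<tau>" "\<tau> \<le> 1"
  shows "(1+\<tau>) * cos (pi*x/L) * cos_moment l L + (1-\<tau>) * \<bar>sin (pi*x/L)\<bar> * sin_moment l L
           \<le> 2 * kconv l (bump L) x"
proof -
  define a b where "a = (1+\<tau>) * cos (pi*x/L)" and "b = (1-\<tau>) * \<bar>sin (pi*x/L)\<bar>"
  have integrable_bump: "integrable lebesgue (\<lambda>y. bump L (x + s * y) * l y)" for s
    using abs_bump_le_1
    by (intro integrable_bounded_mult[OF kernel_okD(1)[OF assms(1)]]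
        continuous_imp_lebesgue_measurable continuous_intros)
  \<comment> \<open>the kernel is even, so the convolution also averages the reflected bump\<close>
  have "kconv l (bump L) x = (LINT y|lebesgue. bump L (x + y) * l y)"
    using lebesgue_integral_real_affine[of "-1" "\<lambda>y. bump L (x - y) * l y" 0]
    by (simp add: kconv_swap kernel_okD(5)[OF assms(1)])
  then have "2 * kconv l (bump L) x = (LINT y|lebesgue. bump L (x - y) * l y + bump L (x + y) * l y)"
    using integrable_bump[of "-1"] integrable_bump[of 1] by (simp add: kconv_swap)
  moreover have "a * cos_moment l L + b * sin_moment l L = (LINT y|lebesgue.
      a * (indicator {-(L/2)..L/2} y * cos (pi * y / L) * l y)
      + b * (indicator {-(L/2)..L/2} y * \<bar>sin (pi * y / L)\<bar> * l y))"
    using integrable_cos_moment[OF assms(1)] integrable_sin_moment[OF assms(1)]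
    unfolding cos_moment_def sin_moment_def by simp
  moreover have "\<dots> \<le> (LINT y|lebesgue. bump L (x - y) * l y + bump L (x + y) * l y)"
  proof (rule Bochner_Integration.integral_mono)
    fix y
    have "indicator {-(L/2)..L/2} y * (a * cos (pi*y/L) + b * \<bar>sin (pi*y/L)\<bar>)
        \<le> bump L (x - y) + bump L (x + y)"
      using weighted_cos_sin_le_bump_pair[OF assms(2-5), of y] bump_nonneg[OF assms(2)]
      unfolding a_def b_def by (auto simp: indicator_def add_nonneg_nonneg algebra_simps)
    then show "a * (indicator {-(L/2)..L/2} y * cos (pi * y / L) * l y)
        + b * (indicator {-(L/2)..L/2} y * \<bar>sin (pi * y / L)\<bar> * l y)
        \<le> bump L (x - y) * l y + bump L (x + y) * l y"
      using kernel_okD(4)[OF assms(1), of y] mult_right_mono by (fastforce simp: algebra_simps)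
  qed (use integrable_cos_moment[OF assms(1)] integrable_sin_moment[OF assms(1)]
      integrable_bump[of "-1"] integrable_bump[of 1] in auto)
  ultimately show ?thesis unfolding a_def b_def by simp
qed

lemma cos_add_le_combination:
  fixes Kc Ks :: real
  assumes "1 \<le> Kc" "0 < Ks"
  obtains g0 where "g0 > 0" "g0 \<le> 1"
    "\<And>u \<gamma>. 0 \<le> \<gamma> \<Longrightarrow> \<gamma> \<le> g0 \<Longrightarrow> 0 \<le> cos (u + \<gamma>) \<Longrightarrow> cos (u + \<gamma>) \<le> Kc * cos u + Ks * \<bar>sin u\<bar>"
proof
  define g0 where "g0 = min 1 (Ks / (1 + 2 * Kc))"
  show "g0 > 0" "g0 \<le> 1" using assms unfolding g0_def by auto
  fix u \<gamma> :: real
  assume \<gamma>: "0 \<le> \<gamma>" "\<gamma> \<le> g0" and nonneg: "0 \<le> cos (u + \<gamma>)"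
  define A B C S where "A = cos u" and "B = sin u" and "C = cos \<gamma>" and "S = sin \<gamma>"
  have "\<gamma> \<le> 1" "\<gamma> \<le> Ks / (1 + 2 * Kc)" using \<gamma> unfolding g0_def by auto
  then have "0 \<le> S" "S \<le> \<gamma>"
    using \<gamma> pi_gt3 sin_x_le_x[of \<gamma>] sin_ge_zero[of \<gamma>] unfolding S_def by auto
  moreover have "\<gamma> * (1 + 2 * Kc) \<le> Ks"
    using \<open>\<gamma> \<le> Ks / (1 + 2 * Kc)\<close> assms(1) by (simp add: le_divide_eq)
  moreover have "S * (1 + 2 * Kc) \<le> \<gamma> * (1 + 2 * Kc)"
    using \<open>S \<le> \<gamma>\<close> assms(1) by (intro mult_right_mono) auto
  ultimately have S: "0 \<le> S" "S * (1 + 2 * Kc) \<le> Ks" by auto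
  have "cos (pi/3) \<le> cos \<gamma>" using \<gamma> \<open>\<gamma> \<le> 1\<close> pi_gt3 by (subst cos_mono_le_eq) auto
  then have C: "1/2 \<le> C" "C \<le> 1" unfolding C_def by (simp_all add: cos_60)
  have AC: "0 \<le> A * C - B * S" using nonneg unfolding A_def B_def C_def S_def by (simp add: cos_add)
  have "A * C - B * S \<le> Kc * A + Ks * \<bar>B\<bar>"
  proof (cases "A \<ge> 0")
    case True
    have "A * C \<le> A * 1" "A * 1 \<le> A * Kc"
      using True C assms(1) by (intro mult_left_mono; simp)+
    moreover have "S \<le> S * (1 + 2 * Kc)" using S assms(1) by (simp add: algebra_simps)
    then have "- B * S \<le> \<bar>B\<bar> * Ks"
      using S abs_ge_minus_self[of B] mult_right_mono[of "- B" "\<bar>B\<bar>" S]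
        mult_left_mono[of S Ks "\<bar>B\<bar>"] by auto
    ultimately show ?thesis by (simp add: algebra_simps)
  next
    case False
    \<comment> \<open>a negative cosine is dominated by the sine term, since the sum stays nonnegative\<close>
    have "- A * (1/2) \<le> - A * C" using False C by (intro mult_left_mono) auto
    also have "\<dots> \<le> - B * S" using AC by simp
    also have "\<dots> \<le> \<bar>B\<bar> * S" using S by (intro mult_right_mono) auto
    finally have "- A \<le> 2 * S * \<bar>B\<bar>" by (simp add: algebra_simps)
    then have "Kc * (- A) \<le> Kc * (2 * S * \<bar>B\<bar>)" using assms(1) by (intro mult_left_mono) auto
    moreover have "(S * (1 + 2 * Kc)) * \<bar>B\<bar> \<le> Ks * \<bar>B\<bar>" using S by (intro mult_right_mono) auto
    moreover have "A * C \<le> 0" using False C by (simp add: mult_nonpos_nonneg)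
    moreover have "- B * S \<le> \<bar>B\<bar> * S" using S by (intro mult_right_mono) auto
    ultimately show ?thesis by (simp add: algebra_simps)
  qed
  then show "cos (u + \<gamma>) \<le> Kc * cos u + Ks * \<bar>sin u\<bar>"
    unfolding A_def B_def C_def S_def by (simp add: cos_add)
qed

lemma bump_shift_le_kconv:
  assumes "kernel_ok l" "L > 0" "0 < \<kappa>" "1 < \<kappa> * cos_moment l L" "0 < sin_moment l L"
  obtains c0 where "c0 > 0" "\<And>c x. 0 \<le> c \<Longrightarrow> c \<le> c0 \<Longrightarrow> bump L (x + c) \<le> \<kappa> * kconv l (bump L) x"
proof -
  define m s where "m = cos_moment l L" and "s = sin_moment l L"
  \<comment> \<open>the weight \<open>\<tau>\<close> trades part of the sine moment for a cosine coefficient of at least 1\<close>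
  define \<tau> where "\<tau> = max 0 (2 / (\<kappa> * m) - 1)"
  define Kc Ks where "Kc = \<kappa> * m * (1 + \<tau>) / 2" and "Ks = \<kappa> * s * (1 - \<tau>) / 2"
  have \<kappa>m: "1 < \<kappa> * m" using assms(4) unfolding m_def .
  then have \<tau>: "0 \<le> \<tau>" "\<tau> < 1" unfolding \<tau>_def by (auto simp: field_simps)
  have "1 \<le> Kc"
    using \<kappa>m unfolding Kc_def \<tau>_def by (cases "2 / (\<kappa> * m) \<ge> 1") (auto simp: field_simps)
  moreover have "0 < Ks" unfolding Ks_def s_def using assms(3,5) \<tau> by simp
  ultimately obtain g0 where g0: "0 < g0" "g0 \<le> 1"
    and trig: "\<And>u \<gamma>. 0 \<le> \<gamma> \<Longrightarrow> \<gamma> \<le> g0 \<Longrightarrow> 0 \<le> cos (u + \<gamma>) \<Longrightarrow>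
        cos (u + \<gamma>) \<le> Kc * cos u + Ks * \<bar>sin u\<bar>"
    using cos_add_le_combination by blast
  show ?thesis
  proof
    show "L / pi * g0 > 0" using g0 assms(2) by simp
    fix c x assume c: "0 \<le> c" "c \<le> L / pi * g0"
    show "bump L (x + c) \<le> \<kappa> * kconv l (bump L) x"
    proof (cases "\<bar>x + c\<bar> \<ge> L/2")
      case True
      then show ?thesis
        using bump_eq_0[OF assms(2) True] assms(3) kconv_nonneg[OF assms(1) bump_nonneg[OF assms(2)]]
        by simp
    next
      case False
      define u \<gamma> where "u = pi * x / L" and "\<gamma> = pi * c / L"
      have \<gamma>: "0 \<le> \<gamma>" "\<gamma> \<le> g0" using c assms(2) unfolding \<gamma>_def by (auto simp: field_simps)
      have "c \<le> L / pi" using c g0 assms(2) mult_left_mono[of g0 1 "L / pi"] by simp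
      also have "\<dots> \<le> L / 2" using assms(2) pi_gt3 by (intro divide_left_mono) auto
      finally have "\<bar>x\<bar> \<le> L" using False c by linarith
      have "bump L (x + c) = cos (u + \<gamma>)"
        using False unfolding u_def \<gamma>_def by (simp add: bump_eq_cos add_divide_distrib distrib_left)
      also have "\<dots> \<le> Kc * cos u + Ks * \<bar>sin u\<bar>"
        using trig[OF \<gamma>] \<open>bump L (x + c) = cos (u + \<gamma>)\<close> bump_nonneg[OF assms(2)] by metis
      also have "\<dots> = \<kappa> / 2 * ((1+\<tau>) * cos u * m + (1-\<tau>) * \<bar>sin u\<bar> * s)"
        unfolding Kc_def Ks_def by (simp add: field_simps)
      also have "\<dots> \<le> \<kappa> / 2 * (2 * kconv l (bump L) x)"
        using kconv_bump_ge_moments[OF assms(1,2) \<open>\<bar>x\<bar> \<le> L\<close> \<tau>(1)] \<tau>(2) assms(3)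
        unfolding u_def m_def s_def by (intro mult_left_mono) auto
      finally show ?thesis by simp
    qed
  qed
qed

lemma cos_moment_tendsto_1:
  assumes "kernel_ok l"
  shows "(\<lambda>n. cos_moment l (real n)) \<longlonglongrightarrow> 1"
proof -
  have "(\<lambda>n. LINT y|lebesgue. indicator {-(real n/2)..real n/2} y * cos (pi * y / real n) * l y)
        \<longlonglongrightarrow> (LINT y|lebesgue. l y)"
  proof (rule integral_dominated_convergence[where w=l])
    show "AE y in lebesgue. (\<lambda>n. indicator {-(real n/2)..real n/2} y * cos (pi * y / real n) * l y)
        \<longlonglongrightarrow> l y"
    proof (rule AE_I2)
      fix y :: real
      obtain N :: nat where N: "2 * \<bar>y\<bar> \<le> real N" using real_arch_simple by blast
      have "y \<in> {-(real n/2)..real n/2}" if "N \<le> n" for n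
        using N that of_nat_mono[OF that] by auto
      then have "\<forall>\<^sub>F n in sequentially. cos (pi * y / real n) * l y
          = indicator {-(real n/2)..real n/2} y * cos (pi * y / real n) * l y"
        unfolding eventually_sequentially by (intro exI[of _ N]) auto
      moreover have "(\<lambda>n. cos (pi * y / real n) * l y) \<longlonglongrightarrow> cos 0 * l y"
        by (intro tendsto_intros)
      ultimately show "(\<lambda>n. indicator {-(real n/2)..real n/2} y * cos (pi * y / real n) * l y)
          \<longlonglongrightarrow> l y"
        using Lim_transform_eventually by fastforce
    qed
    show "AE y in lebesgue. norm (indicator {-(real n/2)..real n/2} y * cos (pi * y / real n) * l y)
        \<le> l y" for n
      using kernel_okD(4)[OF assms] by (intro AE_I2) (auto simp: indicator_def abs_mult
          intro: mult_left_le_one_le)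
  qed (use kernel_okD[OF assms] integrable_cos_moment[OF assms] in auto)
  then show ?thesis using kernel_okD(3)[OF assms] unfolding cos_moment_def by simp
qed

lemma sin_moment_pos:
  assumes "kernel_ok l" "L > 0" "cos_moment l L \<noteq> 0"
  shows "sin_moment l L > 0"
proof -
  let ?fs = "\<lambda>y. indicator {-(L/2)..L/2} y * \<bar>sin (pi * y / L)\<bar> * l y"
  have nonneg: "AE y in lebesgue. 0 \<le> ?fs y"
    using kernel_okD(4)[OF assms(1)] by (intro AE_I2) (auto simp: indicator_def)
  have "sin_moment l L \<noteq> 0"
  proof
    assume "sin_moment l L = 0"
    then have "AE y in lebesgue. ?fs y = 0"
      using integral_nonneg_eq_0_iff_AE[OF integrable_sin_moment[OF assms(1)] nonneg]
      unfolding sin_moment_def by simp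
    moreover have "AE y in lebesgue. y \<noteq> 0" by (rule AE_completion[OF AE_lborel_singleton])
    \<comment> \<open>away from the origin the sine does not vanish on the window, so there \<open>l\<close> vanishes a.e.\<close>
    ultimately have "AE y in lebesgue. indicator {-(L/2)..L/2} y * cos (pi * y / L) * l y = 0"
    proof eventually_elim
      case (elim y)
      show ?case
      proof (cases "y \<in> {-(L/2)..L/2}")
        case True
        have "\<bar>y\<bar> / L < 1" using True assms(2) by (auto simp: field_simps)
        then have "pi * (\<bar>y\<bar> / L) < pi * 1" by (intro mult_strict_left_mono) auto
        then have "\<bar>pi * y / L\<bar> < pi" using assms(2) by (simp add: abs_mult)
        then have "sin (pi * y / L) \<noteq> 0" using elim(2) assms(2) by (simp add: sin_zero_pi_iff)
        then show ?thesis using elim(1) True by simp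
      qed simp
    qed
    then have "cos_moment l L = 0" unfolding cos_moment_def by (rule integral_eq_zero_AE)
    then show False using assms(3) by simp
  qed
  moreover have "sin_moment l L \<ge> 0" unfolding sin_moment_def by (rule integral_nonneg_AE[OF nonneg])
  ultimately show ?thesis by simp
qed

lemma eventually_bump_shift_le_kconv:
  assumes "kernel_ok l" "1 < \<kappa>"
  shows "\<forall>\<^sub>F n in sequentially. \<exists>c0>0. \<forall>c x. 0 \<le> c \<and> c \<le> c0 \<longrightarrow>
           bump (real n) (x + c) \<le> \<kappa> * kconv l (bump (real n)) x"
proof -
  have "(\<lambda>n. \<kappa> * cos_moment l (real n)) \<longlonglongrightarrow> \<kappa> * 1"
    by (intro tendsto_intros cos_moment_tendsto_1 assms(1))
  then have "\<forall>\<^sub>F n in sequentially. 1 < \<kappa> * cos_moment l (real n)"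
    using assms(2) by (simp add: order_tendstoD(1))
  then have "\<forall>\<^sub>F n in sequentially. 1 < \<kappa> * cos_moment l (real n) \<and> 0 < n"
    by (rule eventually_conj[OF _ eventually_gt_at_top])
  then show ?thesis
  proof eventually_elim
    case (elim n)
    then have "0 < sin_moment l (real n)" by (intro sin_moment_pos[OF assms(1)]) auto
    then obtain c0 where "c0 > 0"
      "\<And>c x. 0 \<le> c \<Longrightarrow> c \<le> c0 \<Longrightarrow> bump n (x + c) \<le> \<kappa> * kconv l (bump n) x"
      using bump_shift_le_kconv[OF assms(1), of "real n" \<kappa>] elim assms(2) by auto
    then show ?case by blast
  qed
qed

lemma common_bump_shift:
  assumes "kernel_ok l1" "kernel_ok l2" "1 < \<kappa>"
  obtains L c where "0 < L" "0 < c"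
    "\<And>c' x. 0 \<le> c' \<Longrightarrow> c' \<le> c \<Longrightarrow> bump L (x + c') \<le> \<kappa> * kconv l1 (bump L) x"
    "\<And>c' x. 0 \<le> c' \<Longrightarrow> c' \<le> c \<Longrightarrow> bump L (x + c') \<le> \<kappa> * kconv l2 (bump L) x"
proof -
  have "\<forall>\<^sub>F n in sequentially. 0 < n \<and>
      (\<exists>c0>0. \<forall>c x. 0 \<le> c \<and> c \<le> c0 \<longrightarrow> bump (real n) (x + c) \<le> \<kappa> * kconv l1 (bump (real n)) x) \<and>
      (\<exists>c0>0. \<forall>c x. 0 \<le> c \<and> c \<le> c0 \<longrightarrow> bump (real n) (x + c) \<le> \<kappa> * kconv l2 (bump (real n)) x)"
    using eventually_bump_shift_le_kconv[OF assms(1,3)] eventually_bump_shift_le_kconv[OF assms(2,3)]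
    by (intro eventually_conj eventually_gt_at_top)
  then obtain n where n: "0 < n"
    and "\<exists>c0>0. \<forall>c x. 0 \<le> c \<and> c \<le> c0 \<longrightarrow> bump (real n) (x + c) \<le> \<kappa> * kconv l1 (bump (real n)) x"
    and "\<exists>c0>0. \<forall>c x. 0 \<le> c \<and> c \<le> c0 \<longrightarrow> bump (real n) (x + c) \<le> \<kappa> * kconv l2 (bump (real n)) x"
    unfolding eventually_sequentially by (meson order_refl)
  then obtain c1 c2 where "0 < c1" "0 < c2"
    "\<And>c x. 0 \<le> c \<Longrightarrow> c \<le> c1 \<Longrightarrow> bump (real n) (x + c) \<le> \<kappa> * kconv l1 (bump (real n)) x"
    "\<And>c x. 0 \<le> c \<Longrightarrow> c \<le> c2 \<Longrightarrow> bump (real n) (x + c) \<le> \<kappa> * kconv l2 (bump (real n)) x"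
    by meson
  then show ?thesis using n by (intro that[of "real n" "min c1 c2"]) auto
qed

section \<open>The reaction terms\<close>

definition growth1 :: "real \<Rightarrow> real \<Rightarrow> state \<Rightarrow> real" where
  "growth1 r a p = (1 - fst p) * exp (r * (fst p - a * snd p))"

definition growth2 :: "real \<Rightarrow> real \<Rightarrow> state \<Rightarrow> real" where
  "growth2 r a p = snd p * exp (r * (1 - a - snd p + a * fst p))"

lemma Qop_eq_kconv:
  "Qop r1 r2 a1 a2 l1 l2 U =
     (\<lambda>t. (1 - kconv l1 (\<lambda>y. growth1 r1 a1 (U y)) t, kconv l2 (\<lambda>y. growth2 r2 a2 (U y)) t))"
  unfolding Qop_def kconv_def growth1_def growth2_def by simp

lemma continuous_on_growth [continuous_intros]:
  fixes U :: "real \<Rightarrow> state"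
  assumes "continuous_on S U"
  shows "continuous_on S (\<lambda>y. growth1 r a (U y))" "continuous_on S (\<lambda>y. growth2 r a (U y))"
  unfolding growth1_def growth2_def by (intro continuous_intros assms)+

lemma one_minus_mul_exp_antimono:
  fixes r p p' :: real
  assumes "r \<le> 1" "0 \<le> p" "p \<le> p'" "p' \<le> 1"
  shows "(1 - p') * exp (r * p') \<le> (1 - p) * exp (r * p)"
proof -
  define d where "d = p' - p"
  have "r * (1 - p) * d \<le> d"
    using assms mult_right_mono[of "r * (1 - p)" 1 d] unfolding d_def
    by (smt (verit) mult_left_le_one_le mult_nonneg_nonneg mult_nonpos_nonneg)
  then have "1 - p' \<le> (1 - p) * (1 - r * d)" unfolding d_def by (simp add: algebra_simps)
  also have "\<dots> \<le> (1 - p) * exp (- (r * d))"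
    using assms exp_ge_add_one_self[of "- (r * d)"] by (intro mult_left_mono) auto
  finally have "(1 - p') * exp (r * p') \<le> (1 - p) * exp (- (r * d)) * exp (r * p')"
    by (intro mult_right_mono) auto
  also have "\<dots> = (1 - p) * exp (r * p)"
    by (simp add: mult.assoc exp_add[symmetric] d_def algebra_simps)
  finally show ?thesis .
qed

lemma mul_exp_neg_mono:
  fixes r q q' :: real
  assumes "r \<le> 1" "0 \<le> q" "q \<le> q'" "q' \<le> 1"
  shows "q * exp (- (r * q)) \<le> q' * exp (- (r * q'))"
proof -
  \<comment> \<open>substitute \<open>p = 1 - q\<close> and divide by \<open>exp r\<close>\<close>
  have "(1 - (1 - q)) * exp (r * (1 - q)) \<le> (1 - (1 - q')) * exp (r * (1 - q'))"
    using assms by (intro one_minus_mul_exp_antimono) auto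
  then have "exp r * (q * exp (- (r * q))) \<le> exp r * (q' * exp (- (r * q')))"
    by (simp add: right_diff_distrib exp_diff exp_minus field_simps)
  then show ?thesis by simp
qed

lemma growth1_antimono:
  assumes "0 \<le> r" "r \<le> 1" "0 \<le> a" "0 \<le> fst p" "leq2 p p'" "fst p' \<le> 1"
  shows "growth1 r a p' \<le> growth1 r a p"
proof -
  have "growth1 r a p' = (1 - fst p') * exp (r * fst p') * exp (- (r * a * snd p'))"
    unfolding growth1_def by (simp add: mult.assoc exp_add[symmetric] algebra_simps)
  also have "\<dots> \<le> (1 - fst p') * exp (r * fst p') * exp (- (r * a * snd p))"
    using assms by (intro mult_left_mono) (auto simp: leq2_def intro!: mult_left_mono)
  also have "\<dots> \<le> (1 - fst p) * exp (r * fst p) * exp (- (r * a * snd p))"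
    using assms by (intro mult_right_mono one_minus_mul_exp_antimono) (auto simp: leq2_def)
  also have "\<dots> = growth1 r a p"
    unfolding growth1_def by (simp add: mult.assoc exp_add[symmetric] algebra_simps)
  finally show ?thesis .
qed

lemma growth2_mono:
  assumes "0 \<le> r" "r \<le> 1" "0 \<le> a" "0 \<le> snd p" "leq2 p p'" "snd p' \<le> 1"
  shows "growth2 r a p \<le> growth2 r a p'"
proof -
  have "growth2 r a p = snd p * exp (- (r * snd p)) * exp (r * (1 - a + a * fst p))"
    unfolding growth2_def by (simp add: mult.assoc exp_add[symmetric] algebra_simps)
  also have "\<dots> \<le> snd p * exp (- (r * snd p)) * exp (r * (1 - a + a * fst p'))"
    using assms by (intro mult_left_mono) (auto simp: leq2_def intro!: mult_left_mono)
  also have "\<dots> \<le> snd p' * exp (- (r * snd p')) * exp (r * (1 - a + a * fst p'))"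
    using assms by (intro mult_right_mono mul_exp_neg_mono) (auto simp: leq2_def)
  also have "\<dots> = growth2 r a p'"
    unfolding growth2_def by (simp add: mult.assoc exp_add[symmetric] algebra_simps)
  finally show ?thesis .
qed

lemma growth_in_unit_interval:
  assumes "0 \<le> r" "r \<le> 1" "0 \<le> a" "leq2 (0, 0) p" "leq2 p (1, 1)"
  shows "0 \<le> growth1 r a p" "growth1 r a p \<le> 1" "0 \<le> growth2 r a p" "growth2 r a p \<le> 1"
proof -
  show "0 \<le> growth1 r a p" "0 \<le> growth2 r a p"
    using assms(4,5) unfolding growth1_def growth2_def leq2_def by auto
  have "growth1 r a p \<le> growth1 r a (0, 0)" "growth2 r a p \<le> growth2 r a (1, 1)"
    using assms by (intro growth1_antimono growth2_mono; auto simp: leq2_def)+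
  then show "growth1 r a p \<le> 1" "growth2 r a p \<le> 1"
    unfolding growth1_def growth2_def by simp_all
qed

lemma growth1_diagonal:
  assumes "1 - k1 - a * k2 = 0"
  shows "growth1 r a (1 - k1 + s, k2 + s) = (k1 - s) * exp (- (r * (a - 1) * s))"
proof -
  have "1 - k1 + s - a * (k2 + s) = (1 - k1 - a * k2) - (a - 1) * s" by (simp add: algebra_simps)
  then have "r * (1 - k1 + s - a * (k2 + s)) = - (r * (a - 1) * s)" using assms by simp
  then show ?thesis by (simp only: growth1_def fst_conv snd_conv) simp
qed

lemma growth2_diagonal:
  assumes "1 - k2 - a * k1 = 0"
  shows "growth2 r a (1 - k1 + s, k2 + s) = (k2 + s) * exp (r * (a - 1) * s)"
proof -
  have "1 - a - (k2 + s) + a * (1 - k1 + s) = (1 - k2 - a * k1) + (a - 1) * s"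
    by (simp add: algebra_simps)
  then have "r * (1 - a - (k2 + s) + a * (1 - k1 + s)) = r * (a - 1) * s" using assms by simp
  then show ?thesis by (simp only: growth2_def fst_conv snd_conv)
qed

lemma linear_le_mul_exp:
  fixes k b s \<kappa> :: real
  assumes "0 \<le> k" "0 \<le> b" "0 \<le> s" "\<kappa> \<le> 1 + k * b"
  shows "k + \<kappa> * s \<le> (k + s) * exp (b * s)"
proof -
  have "\<kappa> * s \<le> (1 + k * b) * s" "0 \<le> b * s * s"
    using assms by (simp_all add: mult_right_mono)
  then have "k + \<kappa> * s \<le> k + (1 + k * b) * s + b * s * s" by linarith
  also have "\<dots> = (k + s) * (1 + b * s)" by (simp add: algebra_simps)
  also have "\<dots> \<le> (k + s) * exp (b * s)" using assms by (intro mult_left_mono) auto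
  finally show ?thesis .
qed

lemma mul_exp_neg_le_linear:
  fixes k b s \<kappa> :: real
  assumes "0 < b" "0 \<le> s" "s \<le> k" "\<kappa> * b * s \<le> 1 + k * b - \<kappa>"
  shows "(k - s) * exp (- (b * s)) \<le> k - \<kappa> * s"
proof -
  have pos: "0 < 1 + b * s" using assms by (simp add: add_pos_nonneg)
  have "(k - s) * exp (- (b * s)) = (k - s) / exp (b * s)" by (simp add: exp_minus field_simps)
  also have "\<dots> \<le> (k - s) / (1 + b * s)" using assms pos by (intro divide_left_mono) auto
  also have "\<dots> \<le> k - \<kappa> * s"
  proof -
    have "k - s \<le> (k - \<kappa> * s) * (1 + b * s)"
      using mult_left_mono[OF assms(4) assms(2)] by (simp add: algebra_simps)
    then show ?thesis using pos by (simp add: divide_le_eq)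
  qed
  finally show ?thesis .
qed

section \<open>The competition system\<close>

definition unit_profile :: "sfun \<Rightarrow> bool" where
  "unit_profile U \<longleftrightarrow> continuous_on UNIV U \<and> (\<forall>y. leq2 (0, 0) (U y) \<and> leq2 (U y) (1, 1))"

locale competition =
  fixes r1 r2 a1 a2 :: real and l1 l2 :: "real \<Rightarrow> real"
  assumes r1: "0 < r1" "r1 < 1" and r2: "0 < r2" "r2 < 1" and a1: "1 < a1" and a2: "1 < a2"
    and kernel1: "kernel_ok l1" and kernel2: "kernel_ok l2"
begin

abbreviation Q :: "sfun \<Rightarrow> sfun" where
  "Q \<equiv> Qop r1 r2 a1 a2 l1 l2"

definition k1 :: real where "k1 = (1 - a1) / (1 - a1 * a2)"
definition k2 :: real where "k2 = (1 - a2) / (1 - a1 * a2)"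

lemma k1_k2: "0 < k1" "k1 < 1" "0 < k2" "k2 < 1" "1 - k1 - a1 * k2 = 0" "1 - k2 - a2 * k1 = 0"
proof -
  have neg: "1 - a1 * a2 < 0" using a1 a2 less_1_mult by fastforce
  have "a1 < a1 * a2" "a2 < a1 * a2" using a1 a2 by simp_all
  then show "0 < k1" "k1 < 1" "0 < k2" "k2 < 1" "1 - k1 - a1 * k2 = 0" "1 - k2 - a2 * k1 = 0"
    using neg a1 a2 unfolding k1_def k2_def by (auto simp: field_simps)
qed

lemma abs_growth_le_1:
  assumes "leq2 (0, 0) p" "leq2 p (1, 1)"
  shows "\<bar>growth1 r1 a1 p\<bar> \<le> 1" "\<bar>growth2 r2 a2 p\<bar> \<le> 1"
  using growth_in_unit_interval[OF _ _ _ assms] r1 r2 a1 a2 by auto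

lemma unit_profile_Q:
  assumes "unit_profile U"
  shows "unit_profile (Q U)"
proof -
  have U: "continuous_on UNIV U" "\<And>y. leq2 (0, 0) (U y)" "\<And>y. leq2 (U y) (1, 1)"
    using assms unfolding unit_profile_def by auto
  have bound1: "\<bar>growth1 r1 a1 (U y)\<bar> \<le> 1" and bound2: "\<bar>growth2 r2 a2 (U y)\<bar> \<le> 1" for y
    using abs_growth_le_1[OF U(2,3)] by auto
  have "continuous_on UNIV (Q U)"
    unfolding Qop_eq_kconv
    by (intro continuous_intros continuous_on_kconv[OF kernel1 _ bound1]
        continuous_on_kconv[OF kernel2 _ bound2] U(1))
  moreover have "kconv l1 (\<lambda>y. growth1 r1 a1 (U y)) t \<le> 1" "kconv l2 (\<lambda>y. growth2 r2 a2 (U y)) t \<le> 1"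
    for t using bound1 bound2 U(1)
    by (auto intro!: kconv_le_const[OF kernel1 _ bound1] kconv_le_const[OF kernel2 _ bound2]
        continuous_intros simp: abs_le_iff)
  moreover have "0 \<le> kconv l1 (\<lambda>y. growth1 r1 a1 (U y)) t" "0 \<le> kconv l2 (\<lambda>y. growth2 r2 a2 (U y)) t"
    for t using growth_in_unit_interval[OF _ _ _ U(2,3)] r1 r2 a1 a2
    by (auto intro!: kconv_nonneg kernel1 kernel2)
  ultimately show ?thesis unfolding unit_profile_def Qop_eq_kconv leq2_def by auto
qed

lemma unit_profile_iterate: "unit_profile U \<Longrightarrow> unit_profile ((Q ^^ n) U)"
  by (induction n) (auto intro: unit_profile_Q)

text \<open>Along the diagonal through \<open>F\<^sub>2 = (1 - k1, k2)\<close> the reaction terms move away from \<open>F\<^sub>2\<close>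
  at a linear rate \<open>1 + k\<^sub>i r\<^sub>i (a\<^sub>i - 1) > 1\<close>; any \<open>\<kappa>\<close> below both rates is attained near \<open>F\<^sub>2\<close>.\<close>

lemma diagonal_growth_estimates:
  obtains \<kappa> \<delta> where "1 < \<kappa>" "0 < \<delta>" "\<delta> \<le> k1" "\<delta> \<le> 1 - k1" "\<delta> \<le> k2" "\<delta> \<le> 1 - k2"
    "\<And>s. 0 \<le> s \<Longrightarrow> s \<le> \<delta> \<Longrightarrow> growth1 r1 a1 (1 - k1 + s, k2 + s) \<le> k1 - \<kappa> * s"
    "\<And>s. 0 \<le> s \<Longrightarrow> s \<le> \<delta> \<Longrightarrow> k2 + \<kappa> * s \<le> growth2 r2 a2 (1 - k1 + s, k2 + s)"
    "\<And>s. 0 \<le> s \<Longrightarrow> s \<le> \<delta> \<Longrightarrow> k1 + \<kappa> * s \<le> growth1 r1 a1 (1 - k1 - s, k2 - s)"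
    "\<And>s. 0 \<le> s \<Longrightarrow> s \<le> \<delta> \<Longrightarrow> growth2 r2 a2 (1 - k1 - s, k2 - s) \<le> k2 - \<kappa> * s"
proof -
  define b1 b2 where "b1 = r1 * (a1 - 1)" and "b2 = r2 * (a2 - 1)"
  have b: "0 < b1" "0 < b2" unfolding b1_def b2_def using r1 r2 a1 a2 by auto
  have kb: "0 < k1 * b1" "0 < k2 * b2" using b k1_k2 by auto
  define \<kappa> where "\<kappa> = 1 + min (k1 * b1) (k2 * b2) / 2"
  have \<kappa>: "1 < \<kappa>" "\<kappa> < 1 + k1 * b1" "\<kappa> < 1 + k2 * b2"
    unfolding \<kappa>_def using kb by (auto simp: min_def mult.commute)
  define \<delta> where "\<delta> = Min {k1, 1 - k1, k2, 1 - k2,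
      (1 + k1 * b1 - \<kappa>) / (\<kappa> * b1), (1 + k2 * b2 - \<kappa>) / (\<kappa> * b2)}"
  have \<delta>: "0 < \<delta>" "\<delta> \<le> k1" "\<delta> \<le> 1 - k1" "\<delta> \<le> k2" "\<delta> \<le> 1 - k2"
    "\<delta> \<le> (1 + k1 * b1 - \<kappa>) / (\<kappa> * b1)" "\<delta> \<le> (1 + k2 * b2 - \<kappa>) / (\<kappa> * b2)"
    unfolding \<delta>_def using k1_k2 \<kappa> b by auto
  show ?thesis
  proof (rule that[OF \<kappa>(1) \<delta>(1-5)])
    fix s assume s: "0 \<le> s" "s \<le> \<delta>"
    have "s * (\<kappa> * b1) \<le> \<delta> * (\<kappa> * b1)" "s * (\<kappa> * b2) \<le> \<delta> * (\<kappa> * b2)"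
      using s b \<kappa>(1) by (intro mult_right_mono; simp)+
    moreover have "\<delta> * (\<kappa> * b1) \<le> 1 + k1 * b1 - \<kappa>" "\<delta> * (\<kappa> * b2) \<le> 1 + k2 * b2 - \<kappa>"
      using \<delta>(6,7) b \<kappa>(1) by (simp_all add: le_divide_eq)
    ultimately have "\<kappa> * b1 * s \<le> 1 + k1 * b1 - \<kappa>" "\<kappa> * b2 * s \<le> 1 + k2 * b2 - \<kappa>"
      by (simp_all add: mult.commute)
    then have "(k1 - s) * exp (- (b1 * s)) \<le> k1 - \<kappa> * s" "(k2 - s) * exp (- (b2 * s)) \<le> k2 - \<kappa> * s"
      using s \<delta>(2,4) b by (auto intro: mul_exp_neg_le_linear)
    moreover have "k1 + \<kappa> * s \<le> (k1 + s) * exp (b1 * s)" "k2 + \<kappa> * s \<le> (k2 + s) * exp (b2 * s)"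
      using s k1_k2 b \<kappa> by (auto intro!: linear_le_mul_exp)
    ultimately show "growth1 r1 a1 (1 - k1 + s, k2 + s) \<le> k1 - \<kappa> * s"
      "k2 + \<kappa> * s \<le> growth2 r2 a2 (1 - k1 + s, k2 + s)"
      "k1 + \<kappa> * s \<le> growth1 r1 a1 (1 - k1 - s, k2 - s)"
      "growth2 r2 a2 (1 - k1 - s, k2 - s) \<le> k2 - \<kappa> * s"
      using growth1_diagonal[OF k1_k2(5), of r1 s] growth2_diagonal[OF k1_k2(6), of r2 s]
        growth1_diagonal[OF k1_k2(5), of r1 "- s"] growth2_diagonal[OF k1_k2(6), of r2 "- s"]
      unfolding b1_def b2_def by (simp_all add: mult.assoc)
  qed
qed

end

section \<open>Travelling barriers\<close>

locale barriers = competition +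
  fixes \<kappa> L c \<delta> :: real
  assumes L_pos: "0 < L" and c_pos: "0 < c"
    and delta: "0 < \<delta>" "\<delta> \<le> k1" "\<delta> \<le> 1 - k1" "\<delta> \<le> k2" "\<delta> \<le> 1 - k2"
    and above_F2: "\<And>s. 0 \<le> s \<Longrightarrow> s \<le> \<delta> \<Longrightarrow> growth1 r1 a1 (1 - k1 + s, k2 + s) \<le> k1 - \<kappa> * s"
      "\<And>s. 0 \<le> s \<Longrightarrow> s \<le> \<delta> \<Longrightarrow> k2 + \<kappa> * s \<le> growth2 r2 a2 (1 - k1 + s, k2 + s)"
    and below_F2: "\<And>s. 0 \<le> s \<Longrightarrow> s \<le> \<delta> \<Longrightarrow> k1 + \<kappa> * s \<le> growth1 r1 a1 (1 - k1 - s, k2 - s)"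
      "\<And>s. 0 \<le> s \<Longrightarrow> s \<le> \<delta> \<Longrightarrow> growth2 r2 a2 (1 - k1 - s, k2 - s) \<le> k2 - \<kappa> * s"
    and bump_shift: "\<And>c' x. 0 \<le> c' \<Longrightarrow> c' \<le> c \<Longrightarrow> bump L (x + c') \<le> \<kappa> * kconv l1 (bump L) x"
      "\<And>c' x. 0 \<le> c' \<Longrightarrow> c' \<le> c \<Longrightarrow> bump L (x + c') \<le> \<kappa> * kconv l2 (bump L) x"
begin

text \<open>A bump of height \<open>\<delta>\<close> above \<open>F\<^sub>2\<close> is a subsolution that \<open>Q\<close> carries to the left by \<open>c\<close> in each
  step; a dip of depth \<open>\<delta>\<close> below \<open>F\<^sub>2\<close> is a stationary supersolution.\<close>

definition lower_barrier :: "real \<Rightarrow> sfun" where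
  "lower_barrier \<sigma> y = (1 - k1 + \<delta> * bump L (y + \<sigma>), k2 + \<delta> * bump L (y + \<sigma>))"

definition upper_barrier :: sfun where
  "upper_barrier y = (1 - k1 - \<delta> * bump L y, k2 - \<delta> * bump L y)"

lemma scaled_bump: "0 \<le> \<delta> * bump L y" "\<delta> * bump L y \<le> \<delta>"
  using bump_nonneg[OF L_pos, of y] abs_bump_le_1[of L y] delta(1) by (auto simp: mult_left_le)

lemma growth_above_lower_barrier:
  assumes "leq2 (lower_barrier \<sigma> y) p" "leq2 p (1, 1)"
  shows "growth1 r1 a1 p \<le> k1 - \<kappa> * \<delta> * bump L (y + \<sigma>)"
    "k2 + \<kappa> * \<delta> * bump L (y + \<sigma>) \<le> growth2 r2 a2 p"
proof -
  have nonneg: "0 \<le> fst (lower_barrier \<sigma> y)" "0 \<le> snd (lower_barrier \<sigma> y)"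
    using scaled_bump[of "y + \<sigma>"] k1_k2 unfolding lower_barrier_def by auto
  have "growth1 r1 a1 p \<le> growth1 r1 a1 (lower_barrier \<sigma> y)"
    using assms nonneg r1 a1 by (intro growth1_antimono) (auto simp: leq2_def)
  also have "\<dots> \<le> k1 - \<kappa> * \<delta> * bump L (y + \<sigma>)"
    using above_F2(1)[OF scaled_bump] unfolding lower_barrier_def by (simp add: mult.assoc)
  finally show "growth1 r1 a1 p \<le> k1 - \<kappa> * \<delta> * bump L (y + \<sigma>)" .
  have "k2 + \<kappa> * \<delta> * bump L (y + \<sigma>) \<le> growth2 r2 a2 (lower_barrier \<sigma> y)"
    using above_F2(2)[OF scaled_bump] unfolding lower_barrier_def by (simp add: mult.assoc)
  also have "\<dots> \<le> growth2 r2 a2 p"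
    using assms nonneg r2 a2 by (intro growth2_mono) (auto simp: leq2_def)
  finally show "k2 + \<kappa> * \<delta> * bump L (y + \<sigma>) \<le> growth2 r2 a2 p" .
qed

lemma growth_below_upper_barrier:
  assumes "leq2 (0, 0) p" "leq2 p (upper_barrier y)"
  shows "k1 + \<kappa> * \<delta> * bump L y \<le> growth1 r1 a1 p" "growth2 r2 a2 p \<le> k2 - \<kappa> * \<delta> * bump L y"
proof -
  have below_1: "fst (upper_barrier y) \<le> 1" "snd (upper_barrier y) \<le> 1"
    using scaled_bump[of y] k1_k2 unfolding upper_barrier_def by auto
  have "k1 + \<kappa> * \<delta> * bump L y \<le> growth1 r1 a1 (upper_barrier y)"
    using below_F2(1)[OF scaled_bump] unfolding upper_barrier_def by (simp add: mult.assoc)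
  also have "\<dots> \<le> growth1 r1 a1 p"
    using assms below_1 r1 a1 by (intro growth1_antimono) (auto simp: leq2_def)
  finally show "k1 + \<kappa> * \<delta> * bump L y \<le> growth1 r1 a1 p" .
  have "growth2 r2 a2 p \<le> growth2 r2 a2 (upper_barrier y)"
    using assms below_1 r2 a2 by (intro growth2_mono) (auto simp: leq2_def)
  also have "\<dots> \<le> k2 - \<kappa> * \<delta> * bump L y"
    using below_F2(2)[OF scaled_bump] unfolding upper_barrier_def by (simp add: mult.assoc)
  finally show "growth2 r2 a2 p \<le> k2 - \<kappa> * \<delta> * bump L y" .
qed

lemma unit_profile_growth_bounds:
  assumes "unit_profile U"
  shows "continuous_on UNIV U" "\<And>y. \<bar>growth1 r1 a1 (U y)\<bar> \<le> 1" "\<And>y. \<bar>growth2 r2 a2 (U y)\<bar> \<le> 1"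
  using assms abs_growth_le_1 unfolding unit_profile_def by auto

lemma Q_above_lower_barrier:
  assumes U: "unit_profile U" "\<And>y. leq2 (lower_barrier \<sigma> y) (U y)"
  shows "leq2 (lower_barrier (\<sigma> + c) t) (Q U t)"
proof -
  note U' = unit_profile_growth_bounds[OF U(1)]
  have bounds: "leq2 (U y) (1, 1)" for y using U(1) unfolding unit_profile_def by auto
  have "kconv l1 (\<lambda>y. growth1 r1 a1 (U y)) t \<le> k1 + - (\<kappa> * \<delta>) * kconv l1 (\<lambda>y. bump L (y + \<sigma>)) t"
    using growth_above_lower_barrier(1)[OF U(2) bounds] abs_bump_le_1
    by (intro kconv_le_affine[OF kernel1 _ U'(2)] continuous_intros U'(1)) auto
  also have "\<dots> = k1 - \<delta> * (\<kappa> * kconv l1 (bump L) (t + \<sigma>))"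
    by (simp add: kconv_translate algebra_simps)
  also have "\<dots> \<le> k1 - \<delta> * bump L (t + \<sigma> + c)"
    using bump_shift(1)[of c "t + \<sigma>"] c_pos delta(1) by (simp add: mult_left_mono)
  finally have 1: "kconv l1 (\<lambda>y. growth1 r1 a1 (U y)) t \<le> k1 - \<delta> * bump L (t + (\<sigma> + c))"
    by (simp add: add.assoc)
  have "k2 + \<delta> * bump L (t + \<sigma> + c) \<le> k2 + \<delta> * (\<kappa> * kconv l2 (bump L) (t + \<sigma>))"
    using bump_shift(2)[of c "t + \<sigma>"] c_pos delta(1) by (simp add: mult_left_mono)
  also have "\<dots> = k2 + \<kappa> * \<delta> * kconv l2 (\<lambda>y. bump L (y + \<sigma>)) t"
    by (simp add: kconv_translate algebra_simps)
  also have "\<dots> \<le> kconv l2 (\<lambda>y. growth2 r2 a2 (U y)) t"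
    using growth_above_lower_barrier(2)[OF U(2) bounds] abs_bump_le_1
    by (intro affine_le_kconv[OF kernel2 _ U'(3)] continuous_intros U'(1)) auto
  finally have 2: "k2 + \<delta> * bump L (t + (\<sigma> + c)) \<le> kconv l2 (\<lambda>y. growth2 r2 a2 (U y)) t"
    by (simp add: add.assoc)
  show ?thesis using 1 2 unfolding lower_barrier_def Qop_eq_kconv leq2_def by simp
qed

lemma Q_below_upper_barrier:
  assumes U: "unit_profile U" "\<And>y. leq2 (U y) (upper_barrier y)"
  shows "leq2 (Q U t) (upper_barrier t)"
proof -
  note U' = unit_profile_growth_bounds[OF U(1)]
  have bounds: "leq2 (0, 0) (U y)" for y using U(1) unfolding unit_profile_def by auto
  have "k1 + \<delta> * bump L (t + 0) \<le> k1 + \<delta> * (\<kappa> * kconv l1 (bump L) t)"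
    using bump_shift(1)[of 0 t] c_pos delta(1) by (simp add: mult_left_mono)
  also have "\<dots> = k1 + \<kappa> * \<delta> * kconv l1 (bump L) t" by (simp add: algebra_simps)
  also have "\<dots> \<le> kconv l1 (\<lambda>y. growth1 r1 a1 (U y)) t"
    using growth_below_upper_barrier(1)[OF bounds U(2)] abs_bump_le_1
    by (intro affine_le_kconv[OF kernel1 _ U'(2)] continuous_intros U'(1)) auto
  finally have 1: "k1 + \<delta> * bump L t \<le> kconv l1 (\<lambda>y. growth1 r1 a1 (U y)) t" by simp
  have "kconv l2 (\<lambda>y. growth2 r2 a2 (U y)) t \<le> k2 + - (\<kappa> * \<delta>) * kconv l2 (bump L) t"
    using growth_below_upper_barrier(2)[OF bounds U(2)] abs_bump_le_1
    by (intro kconv_le_affine[OF kernel2 _ U'(3)] continuous_intros U'(1)) auto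
  also have "\<dots> = k2 - \<delta> * (\<kappa> * kconv l2 (bump L) t)" by (simp add: algebra_simps)
  also have "\<dots> \<le> k2 - \<delta> * bump L (t + 0)"
    using bump_shift(2)[of 0 t] c_pos delta(1) by (simp add: mult_left_mono)
  finally have 2: "kconv l2 (\<lambda>y. growth2 r2 a2 (U y)) t \<le> k2 - \<delta> * bump L t" by simp
  show ?thesis using 1 2 unfolding upper_barrier_def Qop_eq_kconv leq2_def by simp
qed

lemma unit_profile_barriers: "unit_profile (lower_barrier 0)" "unit_profile upper_barrier"
proof -
  have "0 \<le> 1 - k1 - \<delta> * bump L y \<and> 1 - k1 - \<delta> * bump L y \<le> 1
      \<and> 0 \<le> 1 - k1 + \<delta> * bump L y \<and> 1 - k1 + \<delta> * bump L y \<le> 1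
      \<and> 0 \<le> k2 - \<delta> * bump L y \<and> k2 - \<delta> * bump L y \<le> 1
      \<and> 0 \<le> k2 + \<delta> * bump L y \<and> k2 + \<delta> * bump L y \<le> 1" for y
    using scaled_bump[of y] delta k1_k2(1-4) by linarith
  then show "unit_profile (lower_barrier 0)" "unit_profile upper_barrier"
    unfolding unit_profile_def lower_barrier_def upper_barrier_def leq2_def
    by (auto intro!: continuous_intros simp del: k1_k2)
qed

lemma iterate_above_lower_barrier:
  "leq2 (lower_barrier (real n * c) t) ((Q ^^ n) (lower_barrier 0) t)"
proof (induction n arbitrary: t)
  case 0
  show ?case by (simp add: leq2_def)
next
  case (Suc n)
  have "leq2 (lower_barrier (real n * c + c) t) (Q ((Q ^^ n) (lower_barrier 0)) t)"
    by (rule Q_above_lower_barrier[OF unit_profile_iterate[OF unit_profile_barriers(1)] Suc.IH])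
  then show ?case by (simp add: algebra_simps)
qed

lemma iterate_below_upper_barrier: "leq2 ((Q ^^ n) upper_barrier t) (upper_barrier t)"
proof (induction n arbitrary: t)
  case 0
  show ?case by (simp add: leq2_def)
next
  case (Suc n)
  then show ?case
    using Q_below_upper_barrier[OF unit_profile_iterate[OF unit_profile_barriers(2)]] by simp
qed

lemma barriers_in_Cint:
  "lower_barrier 0 \<in> Cint (1 - k1, k2) (1, 1)" "upper_barrier \<in> Cint (0, 0) (1 - k1, k2)"
proof -
  have "lower_barrier 0 = (\<lambda>y. (1 - k1 + \<delta> * bump L y, k2 + \<delta> * bump L y))"
    "upper_barrier = (\<lambda>y. (1 - k1 + - \<delta> * bump L y, k2 + - \<delta> * bump L y))"
    unfolding lower_barrier_def upper_barrier_def by auto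
  then have "lower_barrier 0 \<in> UCB" "upper_barrier \<in> UCB"
    using bump_profile_in_UCB[OF L_pos, of "1 - k1" \<delta> k2]
      bump_profile_in_UCB[OF L_pos, of "1 - k1" "- \<delta>" k2] by simp_all
  moreover have "leq2 (1 - k1, k2) (lower_barrier 0 y)" "leq2 (0, 0) (upper_barrier y)"
    "leq2 (upper_barrier y) (1 - k1, k2)" for y
    unfolding lower_barrier_def upper_barrier_def leq2_def fst_conv snd_conv
    using scaled_bump[of y] scaled_bump[of "y + 0"] delta by (intro conjI; linarith)+
  ultimately show "lower_barrier 0 \<in> Cint (1 - k1, k2) (1, 1)" "upper_barrier \<in> Cint (0, 0) (1 - k1, k2)"
    using unit_profile_barriers unfolding Cint_def unit_profile_def by auto
qed

lemma barriers_outside_support: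
  assumes "\<bar>x\<bar> > L/2"
  shows "lower_barrier 0 x = (1 - k1, k2)" "upper_barrier x = (1 - k1, k2)"
  using bump_eq_0[OF L_pos] assms unfolding lower_barrier_def upper_barrier_def by auto

lemma c_le_left_speed:
  assumes "left_speed Q (1 - k1, k2) (1, 1) cm"
  shows "c \<le> cm"
proof (rule ccontr)
  assume "\<not> c \<le> cm"
  then have c': "cm < (cm + c) / 2" "(cm + c) / 2 < c" by auto
  have "\<exists>R. \<forall>x. \<bar>x\<bar> > R \<longrightarrow> lower_barrier 0 x = (1 - k1, k2)"
    using barriers_outside_support(1) by blast
  then have "\<forall>\<^sub>F n in sequentially. \<forall>x. x \<le> - ((cm + c) / 2) * real n \<longrightarrow>
      dist ((Q ^^ n) (lower_barrier 0) x) (1 - k1, k2) \<le> \<delta> / 2"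
    using assms[unfolded left_speed_def, THEN conjunct1, rule_format, OF barriers_in_Cint(1)
        _ c'(1), of "\<delta> / 2"] delta(1) by simp
  then obtain N where N: "\<forall>x. x \<le> - ((cm + c) / 2) * real N \<longrightarrow>
      dist ((Q ^^ N) (lower_barrier 0) x) (1 - k1, k2) \<le> \<delta> / 2"
    unfolding eventually_sequentially by blast
  \<comment> \<open>at the centre of the barrier, which has travelled \<open>N c\<close> to the left, the iterate is \<open>\<delta>\<close> above \<open>F\<^sub>2\<close>\<close>
  define x where "x = - c * real N"
  have "x \<le> - ((cm + c) / 2) * real N"
    unfolding x_def using mult_right_mono[of "(cm + c) / 2" c "real N"] c' by simp
  then have "dist ((Q ^^ N) (lower_barrier 0) x) (1 - k1, k2) \<le> \<delta> / 2" using N by blast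
  moreover have "1 - k1 + \<delta> \<le> fst ((Q ^^ N) (lower_barrier 0) x)"
    using iterate_above_lower_barrier[of N x] bump_0[OF L_pos]
    unfolding lower_barrier_def leq2_def x_def by simp
  ultimately show False
    using dist_fst_le[of "(Q ^^ N) (lower_barrier 0) x" "(1 - k1, k2)"] delta(1)
    by (simp add: dist_real_def)
qed

lemma right_speed_nonneg:
  assumes "right_speed Q (0, 0) (1 - k1, k2) cp"
  shows "0 \<le> cp"
proof (rule ccontr)
  assume "\<not> 0 \<le> cp"
  then have c': "cp < cp / 2" "cp / 2 < 0" by auto
  have "\<exists>R. \<forall>x. \<bar>x\<bar> > R \<longrightarrow> upper_barrier x = (1 - k1, k2)"
    using barriers_outside_support(2) by blast
  then have "\<forall>\<^sub>F n in sequentially. \<forall>x. cp / 2 * real n \<le> x \<longrightarrow>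
      dist ((Q ^^ n) upper_barrier x) (1 - k1, k2) \<le> \<delta> / 2"
    using assms[unfolded right_speed_def, THEN conjunct1, rule_format, OF barriers_in_Cint(2)
        _ c'(1), of "\<delta> / 2"] delta(1) by simp
  then obtain N where N: "\<forall>x. cp / 2 * real N \<le> x \<longrightarrow>
      dist ((Q ^^ N) upper_barrier x) (1 - k1, k2) \<le> \<delta> / 2"
    unfolding eventually_sequentially by blast
  then have "dist ((Q ^^ N) upper_barrier 0) (1 - k1, k2) \<le> \<delta> / 2"
    using c'(2) by (simp add: mult_nonpos_nonneg)
  moreover have "fst ((Q ^^ N) upper_barrier 0) \<le> 1 - k1 - \<delta>"
    using iterate_below_upper_barrier[of N 0] bump_0[OF L_pos]
    unfolding upper_barrier_def leq2_def by simp
  ultimately show False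
    using dist_fst_le[of "(Q ^^ N) upper_barrier 0" "(1 - k1, k2)"] delta(1)
    by (simp add: dist_real_def)
qed

end

context competition
begin

lemma exists_barriers:
  obtains \<kappa> L c \<delta> where "barriers r1 r2 a1 a2 l1 l2 \<kappa> L c \<delta>"
proof (rule diagonal_growth_estimates)
  fix \<kappa> \<delta> assume \<kappa>: "1 < \<kappa>" and diagonal: "0 < \<delta>" "\<delta> \<le> k1" "\<delta> \<le> 1 - k1" "\<delta> \<le> k2" "\<delta> \<le> 1 - k2"
    "\<And>s. 0 \<le> s \<Longrightarrow> s \<le> \<delta> \<Longrightarrow> growth1 r1 a1 (1 - k1 + s, k2 + s) \<le> k1 - \<kappa> * s"
    "\<And>s. 0 \<le> s \<Longrightarrow> s \<le> \<delta> \<Longrightarrow> k2 + \<kappa> * s \<le> growth2 r2 a2 (1 - k1 + s, k2 + s)"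
    "\<And>s. 0 \<le> s \<Longrightarrow> s \<le> \<delta> \<Longrightarrow> k1 + \<kappa> * s \<le> growth1 r1 a1 (1 - k1 - s, k2 - s)"
    "\<And>s. 0 \<le> s \<Longrightarrow> s \<le> \<delta> \<Longrightarrow> growth2 r2 a2 (1 - k1 - s, k2 - s) \<le> k2 - \<kappa> * s"
  show ?thesis
  proof (rule common_bump_shift[OF kernel1 kernel2 \<kappa>])
    fix L c assume "0 < L" "0 < c"
      "\<And>c' x. 0 \<le> c' \<Longrightarrow> c' \<le> c \<Longrightarrow> bump L (x + c') \<le> \<kappa> * kconv l1 (bump L) x"
      "\<And>c' x. 0 \<le> c' \<Longrightarrow> c' \<le> c \<Longrightarrow> bump L (x + c') \<le> \<kappa> * kconv l2 (bump L) x"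
    then show ?thesis
      using diagonal
      by (intro that[of \<kappa> L c \<delta>] barriers.intro competition_axioms barriers_axioms.intro) auto
  qed
qed

lemma speeds_sum_pos:
  assumes "left_speed Q (1 - k1, k2) (1, 1) cm" "right_speed Q (0, 0) (1 - k1, k2) cp"
  shows "0 < cm + cp"
proof (rule exists_barriers)
  fix \<kappa> L c \<delta> assume "barriers r1 r2 a1 a2 l1 l2 \<kappa> L c \<delta>"
  then interpret barriers r1 r2 a1 a2 l1 l2 \<kappa> L c \<delta> .
  show ?thesis using c_le_left_speed[OF assms(1)] right_speed_nonneg[OF assms(2)] c_pos by linarith
qed

end

theorem lemma6:
  fixes r1 r2 a1 a2 :: real and l1 l2 :: "real \<Rightarrow> real"
  assumes "0 < r1" "r1 < 1" "0 < r2" "r2 < 1" "a1 > 1" "a2 > 1"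
    and "kernel_ok l1" "kernel_ok l2"
  shows "\<forall>cm cp. left_speed (Qop r1 r2 a1 a2 l1 l2)
                     (1 - (1 - a1) / (1 - a1 * a2), (1 - a2) / (1 - a1 * a2)) (1, 1) cm
              \<and> right_speed (Qop r1 r2 a1 a2 l1 l2)
                     (0, 0) (1 - (1 - a1) / (1 - a1 * a2), (1 - a2) / (1 - a1 * a2)) cp
              \<longrightarrow> cm + cp > 0"
proof -
  interpret competition r1 r2 a1 a2 l1 l2 using assms by unfold_locales auto
  show ?thesis using speeds_sum_pos unfolding k1_def k2_def by blast
qed

end
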